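(* Assume the standing assumptions below. Let $\{u^{(k)}=w_{i_k}\cdots w_{j_k}\}_{k\ge0}$ be a $\Delta$-sequence whose signed left stretches $\sigma^{(k)}=\sigma$ and signed right stretches $\rho^{(k)}=\rho$ are constant for all $k\ge1$. Let $A$ be the incidence matrix of $h$ and $\mathbf 1$ the all-ones row vector of length $|\Sigma|$. Then there exist integral column vectors $U,V,X,Y$ of length $|\Sigma|$, with $U,V$ nonnegative and nonzero, and a constant $c$, such that for all $k\ge0$: $i_k=\mathbf 1\big(A^kV+(\sum_{n=0}^{k-1}A^n)X\big)$; $j_k=i_k+\mathbf 1\big(A^kU+(\sum_{n=0}^{k-1}A^n)Y\big)-1$; and $j_k/i_k<c$.
   Context: Standing assumptions: $\Sigma=\{0,\dots,n-1\}$ is a finite alphabet; $h:\Sigma^*\to\Sigma^*$ is a nonerasing morphism prolongable on $w_0$ and $\mathbf w=w_0w_1w_2\cdots=h^\omega(w_0)$ is aperiodic; $h$ satisfies $\mathrm{alph}(h^n(a))=\mathrm{alph}(h(a))$ for all $a$, $n\ge1$ ($\mathrm{alph}(w)$ = set of letters of $w$); $M=\max\{|h(a)|:a\in\Sigma\}$; $\Delta\subsetneq\Sigma$ nonempty, $\overline\Delta=\Sigma\setminus\Delta$. Positions are indexed from $0$. The incidence matrix $A=(a_{i,j})$ of $h$ has $a_{i,j}=|h(j)|_i$ (number of occurrences of letter $i$ in $h(j)$). A factor $w_i\cdots w_j$ is a $\Delta$-block if all its letters are in $\Delta$; maximal if also $w_{j+1}\in\overline\Delta$ and ($i=0$ or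 $w_{i-1}\in\overline\Delta$). Occurrences are factors with position intervals; $u'\prec u$ means interval containment. Since $\mathbf w=h(w_0)h(w_1)\cdots$, $h(w_p\cdots w_q)$ denotes the occurrence occupying the positions of blocks $h(w_p),\dots,h(w_q)$. A $\Delta$-sequence is a sequence $u^{(k)}=w_{i_k}\cdots w_{j_k}$ ($k\ge0$) of maximal $\Delta$-blocks with $i_k>M$, $|u^{(k)}|>M^2$, and $h(w_{i_k+M}\cdots w_{j_k-M})\prec u^{(k+1)}\prec h(w_{i_k-M+1}\cdots w_{j_k+M-1})$. Stretches: let $h(w_{i_k})$ occupy positions $r_{k+1},\dots,s_{k+1}$ and $h(w_{j_k})$ occupy $m_{k+1},\dots,n_{k+1}$. Left stretch $\sigma^{(k+1)}$: positive word $w_{i_{k+1}}\cdots w_{r_{k+1}-1}$ if $i_{k+1}<r_{k+1}$; negative word $w_{r_{k+1}}\cdots w_{i_{k+1}-1}$ if $i_{k+1}>r_{k+1}$; $\epsilon$ if equal. Right stretch $\rho^{(k+1)}$: positive word $w_{n_{k+1}+1}\cdots w_{j_{k+1}}$ if $j_{k+1}>n_{k+1}$; negative word $w_{j_{k+1}+1}\cdots w_{n_{k+1}}$ if $j_{k+1}<n_{k+1}$; $\epsilon$ if equal. Stretches are pairs (word, sign). *)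

theory Defs
  imports Main "Jordan_Normal_Form.Matrix"
begin

text \<open>Alphabet: the letters 0..n-1 (natural numbers); words are lists; the infinite
word w is a function nat => nat (positions from 0); the morphism h is given by
the images of the letters.\<close>

definition morph :: "(nat \<Rightarrow> nat list) \<Rightarrow> nat list \<Rightarrow> nat list" where
  "morph h u = concat (map h u)"

definition aperiodic :: "(nat \<Rightarrow> nat) \<Rightarrow> bool" where
  "aperiodic w \<longleftrightarrow> \<not> (\<exists>p>0. \<exists>N. \<forall>i\<ge>N. w (i + p) = w i)"

definition standing :: "nat \<Rightarrow> (nat \<Rightarrow> nat list) \<Rightarrow> (nat \<Rightarrow> nat) \<Rightarrow> bool" where
  "standing n h w \<longleftrightarrow>
     n \<ge> 1 \<and>
     (\<forall>a<n. h a \<noteq> [] \<and> set (h a) \<subseteq> {..<n}) \<and>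
     w 0 < n \<and>
     (\<exists>z. z \<noteq> [] \<and> h (w 0) = w 0 # z) \<and>
     (\<forall>k p. p < length ((morph h ^^ k) [w 0]) \<longrightarrow> w p = ((morph h ^^ k) [w 0]) ! p) \<and>
     aperiodic w \<and>
     (\<forall>a<n. \<forall>m\<ge>1. set ((morph h ^^ m) [a]) = set (h a))"

definition maxlen :: "nat \<Rightarrow> (nat \<Rightarrow> nat list) \<Rightarrow> nat" where
  "maxlen n h = Max ((\<lambda>a. length (h a)) ` {..<n})"

text \<open>Since w = h(w_0) h(w_1) ..., the block h(w_p) starts at position blk_start h w p.\<close>
definition blk_start :: "(nat \<Rightarrow> nat list) \<Rightarrow> (nat \<Rightarrow> nat) \<Rightarrow> nat \<Rightarrow> nat" where
  "blk_start h w p = (\<Sum>q<p. length (h (w q)))"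

definition maximal_block :: "nat set \<Rightarrow> (nat \<Rightarrow> nat) \<Rightarrow> nat \<Rightarrow> nat \<Rightarrow> bool" where
  "maximal_block D w i j \<longleftrightarrow> i \<le> j \<and> (\<forall>p. i \<le> p \<and> p \<le> j \<longrightarrow> w p \<in> D) \<and>
     w (Suc j) \<notin> D \<and> (i = 0 \<or> w (i - 1) \<notin> D)"

text \<open>Delta-sequence: u^(k) = w_{i k} ... w_{j k}.  The occurrence
h(w_p ... w_q) occupies positions blk_start p .. blk_start (q+1) - 1; containment of
occurrences is containment of position intervals.\<close>
definition delta_seq :: "nat \<Rightarrow> (nat \<Rightarrow> nat list) \<Rightarrow> (nat \<Rightarrow> nat) \<Rightarrow> nat set
     \<Rightarrow> (nat \<Rightarrow> nat) \<Rightarrow> (nat \<Rightarrow> nat) \<Rightarrow> bool" where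
  "delta_seq n h w D i j \<longleftrightarrow>
    (let M = maxlen n h in
     \<forall>k. maximal_block D w (i k) (j k) \<and> i k > M \<and> j k + 1 - i k > M ^ 2 \<and>
       blk_start h w (i k - M + 1) \<le> i (Suc k) \<and>
       i (Suc k) \<le> blk_start h w (i k + M) \<and>
       blk_start h w (j k - M + 1) \<le> j (Suc k) + 1 \<and>
       j (Suc k) + 1 \<le> blk_start h w (j k + M))"

text \<open>Signed stretches: pairs (word, sign) with sign 1 (positive), -1 (negative),
and ([],0) for the empty stretch. lstretch h w i k is sigma^(k+1), determined by
u^(k) and u^(k+1); similarly rstretch h w j k is rho^(k+1).\<close>
definition lstretch :: "(nat \<Rightarrow> nat list) \<Rightarrow> (nat \<Rightarrow> nat) \<Rightarrow> (nat \<Rightarrow> nat) \<Rightarrow> nat \<Rightarrow> nat list \<times> int" where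
  "lstretch h w i k =
    (let r = blk_start h w (i k); i' = i (Suc k) in
     if i' < r then (map w [i'..<r], 1)
     else if r < i' then (map w [r..<i'], -1)
     else ([], 0))"

definition rstretch :: "(nat \<Rightarrow> nat list) \<Rightarrow> (nat \<Rightarrow> nat) \<Rightarrow> (nat \<Rightarrow> nat) \<Rightarrow> nat \<Rightarrow> nat list \<times> int" where
  "rstretch h w j k =
    (let nn = blk_start h w (Suc (j k)) - 1; j' = j (Suc k) in
     if nn < j' then (map w [Suc nn..<Suc j'], 1)
     else if j' < nn then (map w [Suc j'..<Suc nn], -1)
     else ([], 0))"

definition incidence :: "nat \<Rightarrow> (nat \<Rightarrow> nat list) \<Rightarrow> int mat" where
  "incidence n h = mat n n (\<lambda>(a, b). int (count_list (h b) a))"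

fun pow_sum :: "nat \<Rightarrow> int mat \<Rightarrow> nat \<Rightarrow> int mat" where
  "pow_sum d A 0 = 0\<^sub>m d d"
| "pow_sum d A (Suc k) = pow_sum d A k + A ^\<^sub>m k"

definition ones_mult :: "nat \<Rightarrow> int vec \<Rightarrow> int" where
  "ones_mult d v = vec d (\<lambda>_. 1) \<bullet> v"

end

theory Submission
  imports Defs
begin

(*
  Let P_k be the Parikh vector of the prefix w[0 .. i_k - 1] and Q_k that of
  w[0 .. j_k].  Since w = h(w), the prefix ending just before the block h(w_p) is the image
  under h of the prefix of length p, so A P_k is the Parikh vector of the prefix ending
  before h(w_{i_k}); the left stretch is exactly the difference between that prefix and the
  prefix ending before u^(k+1).  Hence P_{k+1} = A P_k + X with X = -(signed Parikh vector
  of sigma), and likewise Q_{k+1} = A Q_k + Y' with Y' the signed Parikh vector of rho.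
  Affine recurrences have the closed form A^k V + (sum_{m<k} A^m) X, and the total of a
  Parikh vector is the length of the word, which gives the formulas for i_k and for
  j_k - i_k + 1 (the Parikh vector of u^(k) is Q_k - P_k).  For the bound on j_k / i_k:
  the letter following u^(0) lies outside Delta and occurs in every block h^m(t) of
  w = w_0 t h(t) h^2(t) ...; such blocks occur in every window (x, M^2 x), so a Delta-block
  starting at i_k ends before M^2 i_k.
*)

(* Words, morphisms and prefixes of an infinite word *)

lemma morph_Nil [simp]: "morph h [] = []"
  and morph_Cons [simp]: "morph h (a # u) = h a @ morph h u"
  and morph_append [simp]: "morph h (u @ v) = morph h u @ morph h v"
  by (simp_all add: morph_def)

definition wprefix :: "(nat \<Rightarrow> nat) \<Rightarrow> nat \<Rightarrow> nat list" where
  "wprefix w L = map w [0..<L]"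

lemma length_wprefix [simp]: "length (wprefix w L) = L"
  by (simp add: wprefix_def)

lemma wprefix_split: "a \<le> b \<Longrightarrow> wprefix w b = wprefix w a @ map w [a..<b]"
  unfolding wprefix_def by (metis map_append le_add_diff_inverse upt_add_eq_append zero_le)

lemma blk_start_eq_length: "blk_start h w p = length (morph h (wprefix w p))"
  by (induction p) (simp_all add: blk_start_def wprefix_def)

lemma morph_power_append: "(morph h ^^ m) (u @ v) = (morph h ^^ m) u @ (morph h ^^ m) v"
  by (induction m) simp_all

lemma morph_power_letters: "set ((morph h ^^ m) u) = (\<Union>b\<in>set u. set ((morph h ^^ m) [b]))"
proof (induction u)
  case Nil
  have "(morph h ^^ m) [] = []" by (induction m) simp_all
  then show ?case by simp
next
  case (Cons b u)
  then show ?case using morph_power_append[where u="[b]" and v=u] by simp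
qed

(* Affine recurrences of integer vectors *)

lemma pow_sum_carrier [simp]: "A \<in> carrier_mat d d \<Longrightarrow> pow_sum d A k \<in> carrier_mat d d"
  by (induction k) auto

lemma zero_mat_mult_vec [simp]: "v \<in> carrier_vec nc \<Longrightarrow> 0\<^sub>m nr nc *\<^sub>v v = 0\<^sub>v nr"
  by (intro eq_vecI) (auto simp: scalar_prod_def)

(* Closed form of the affine recurrence P_(k+1) = A P_k + X: proved by peeling off the
   first step, which matches the right-multiplication in A^(k+1) = A^k A. *)
lemma affine_recurrence_closed_form:
  assumes A: "A \<in> carrier_mat d d" and V: "V \<in> carrier_vec d" and X: "X \<in> carrier_vec d"
    and start: "P 0 = V" and step: "\<And>k. P (Suc k) = A *\<^sub>v P k + X"
  shows "P k = (A ^\<^sub>m k) *\<^sub>v V + pow_sum d A k *\<^sub>v X"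
  using V start step
proof (induction k arbitrary: P V)
  case 0
  then show ?case using A X by simp
next
  case (Suc k)
  have V': "A *\<^sub>v V + X \<in> carrier_vec d" using A Suc.prems(1) X by simp
  have "P (Suc k) = (A ^\<^sub>m k) *\<^sub>v (A *\<^sub>v V + X) + pow_sum d A k *\<^sub>v X"
    using Suc.IH[of "A *\<^sub>v V + X" "\<lambda>m. P (Suc m)"] V' Suc.prems by simp
  also have "\<dots> = (A ^\<^sub>m k * A) *\<^sub>v V + ((A ^\<^sub>m k) *\<^sub>v X + pow_sum d A k *\<^sub>v X)"
    using A X Suc.prems(1)
    by (simp add: mult_add_distrib_mat_vec[of _ d d] assoc_mult_mat_vec[of _ d d _ d])
      (intro eq_vecI; simp add: carrier_matD[OF pow_sum_carrier[OF A]])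
  also have "\<dots> = (A ^\<^sub>m Suc k) *\<^sub>v V + pow_sum d A (Suc k) *\<^sub>v X"
    using A X by (simp add: add_mult_distrib_mat_vec[of _ d d])
      (intro eq_vecI; simp add: carrier_matD[OF pow_sum_carrier[OF A]] ac_simps)
  finally show ?case .
qed

lemma affine_step_diff:
  fixes A :: "int mat"
  assumes A: "A \<in> carrier_mat d d" and "p \<in> carrier_vec d" "q \<in> carrier_vec d"
    "X \<in> carrier_vec d" "Y \<in> carrier_vec d"
    and "p' = A *\<^sub>v p + X" and "q' = A *\<^sub>v q + Y"
  shows "q' - p' = A *\<^sub>v (q - p) + (Y - X)"
  using assms by (simp add: mult_minus_distrib_mat_vec[of _ d d]) (intro eq_vecI; simp)

(* Parikh vectors; the incidence matrix acts on them as h acts on words *)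

definition parikh :: "nat \<Rightarrow> nat list \<Rightarrow> int vec" where
  "parikh n u = vec n (\<lambda>a. int (count_list u a))"

lemma parikh_carrier [simp]: "parikh n u \<in> carrier_vec n"
  and parikh_dim [simp]: "dim_vec (parikh n u) = n"
  and parikh_index [simp]: "a < n \<Longrightarrow> parikh n u $ a = int (count_list u a)"
  by (simp_all add: parikh_def)

lemma parikh_append: "parikh n (u @ v) = parikh n u + parikh n v"
  by (intro eq_vecI) simp_all

lemma parikh_nonzero:
  assumes "set u \<subseteq> {..<n}" and "u \<noteq> []"
  shows "parikh n u \<noteq> 0\<^sub>v n"
proof
  assume zero: "parikh n u = 0\<^sub>v n"
  have a: "hd u < n" using assms hd_in_set by blast
  have "count_list u (hd u) \<noteq> 0" using assms(2) by (simp add: count_list_0_iff)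
  then show False using arg_cong[OF zero, of "\<lambda>v. v $ hd u"] a by simp
qed

lemma incidence_carrier [simp]: "incidence n h \<in> carrier_mat n n"
  by (simp add: incidence_def)

lemma incidence_parikh:
  assumes "set u \<subseteq> {..<n}"
  shows "incidence n h *\<^sub>v parikh n u = parikh n (morph h u)"
proof (rule eq_vecI)
  fix a assume "a < dim_vec (parikh n (morph h u))"
  then have a: "a < n" by simp
  have "(incidence n h *\<^sub>v parikh n u) $ a = (\<Sum>b<n. int (count_list (h b) a) * int (count_list u b))"
    using a by (simp add: incidence_def scalar_prod_def lessThan_atLeast0)
  also have "\<dots> = int (\<Sum>b<n. count_list u b * count_list (h b) a)"
    by (simp add: mult.commute)
  also have "(\<Sum>b<n. count_list u b * count_list (h b) a) = count_list (morph h u) a"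
    by (simp add: morph_def count_list_concat comp_def sum_list_map_eq_sum_count2[OF assms])
  finally show "(incidence n h *\<^sub>v parikh n u) $ a = parikh n (morph h u) $ a" using a by simp
qed (simp add: incidence_def)

lemma ones_mult_parikh:
  assumes "set u \<subseteq> {..<n}"
  shows "ones_mult n (parikh n u) = int (length u)"
proof -
  have "ones_mult n (parikh n u) = int (\<Sum>a<n. count_list u a)"
    by (simp add: ones_mult_def scalar_prod_def lessThan_atLeast0)
  also have "(\<Sum>a<n. count_list u a) = length u" using assms by (simp add: sum_count_set)
  finally show ?thesis .
qed

definition signed_parikh :: "nat \<Rightarrow> nat list \<times> int \<Rightarrow> int vec" where
  "signed_parikh n s = snd s \<cdot>\<^sub>v parikh n (fst s)"

lemma signed_parikh_carrier [simp]: "signed_parikh n s \<in> carrier_vec n"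
  by (simp add: signed_parikh_def)

lemma left_stretch_parikh:
  "parikh n (wprefix w (i (Suc k)))
     = parikh n (wprefix w (blk_start h w (i k))) - signed_parikh n (lstretch h w i k)"
proof -
  define r where "r = blk_start h w (i k)"
  define i' where "i' = i (Suc k)"
  consider (pos) "i' < r" | (neg) "r < i'" | (empty) "i' = r" by linarith
  then show ?thesis
  proof cases
    case pos
    then have "lstretch h w i k = (map w [i'..<r], 1)"
      by (simp add: lstretch_def Let_def r_def i'_def)
    moreover have "wprefix w r = wprefix w i' @ map w [i'..<r]"
      by (rule wprefix_split) (use pos in simp)
    ultimately show ?thesis unfolding r_def[symmetric] i'_def[symmetric]
      by (intro eq_vecI) (simp_all add: signed_parikh_def parikh_append)
  next
    case neg
    then have "lstretch h w i k = (map w [r..<i'], -1)"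
      by (simp add: lstretch_def Let_def r_def i'_def)
    moreover have "wprefix w i' = wprefix w r @ map w [r..<i']"
      by (rule wprefix_split) (use neg in simp)
    ultimately show ?thesis unfolding r_def[symmetric] i'_def[symmetric]
      by (intro eq_vecI) (simp_all add: signed_parikh_def parikh_append)
  next
    case empty
    then have "lstretch h w i k = ([], 0)" by (simp add: lstretch_def Let_def r_def i'_def)
    with empty show ?thesis unfolding r_def[symmetric] i'_def[symmetric]
      by (intro eq_vecI) (simp_all add: signed_parikh_def)
  qed
qed

(* The standing assumptions: w = h^omega(w_0) is the fixed point of h starting with w_0. *)
locale fixed_point =
  fixes n :: nat and h :: "nat \<Rightarrow> nat list" and w :: "nat \<Rightarrow> nat"
  assumes standing: "standing n h w"
begin

definition approx :: "nat \<Rightarrow> nat list" where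
  "approx k = (morph h ^^ k) [w 0]"

definition tail0 :: "nat list" where
  "tail0 = tl (h (w 0))"

lemma image_nonempty: "a < n \<Longrightarrow> h a \<noteq> []"
  and image_letters: "a < n \<Longrightarrow> set (h a) \<subseteq> {..<n}"
  and first_letter: "w 0 < n"
  and w_approx: "p < length (approx k) \<Longrightarrow> w p = approx k ! p"
  and letters_stable: "a < n \<Longrightarrow> 1 \<le> m \<Longrightarrow> set ((morph h ^^ m) [a]) = set (h a)"
  using standing by (simp_all add: standing_def approx_def)

lemma first_image: "h (w 0) = w 0 # tail0" and tail0_nonempty: "tail0 \<noteq> []"
  using standing by (auto simp: standing_def tail0_def)

lemma morph_letters: "set u \<subseteq> {..<n} \<Longrightarrow> set (morph h u) \<subseteq> {..<n}"
  using image_letters by (induction u) auto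

lemma length_morph_ge: "set u \<subseteq> {..<n} \<Longrightarrow> length u \<le> length (morph h u)"
proof (induction u)
  case (Cons a u)
  then have "1 \<le> length (h a)" using image_nonempty[of a] by (cases "h a") auto
  with Cons show ?case by simp
qed simp

lemma image_length_le: "a < n \<Longrightarrow> length (h a) \<le> maxlen n h"
  unfolding maxlen_def by (rule Max_ge) auto

lemma length_morph_le: "set u \<subseteq> {..<n} \<Longrightarrow> length (morph h u) \<le> maxlen n h * length u"
proof (induction u)
  case (Cons a u)
  then show ?case using image_length_le[of a] by simp
qed simp

lemma maxlen_pos: "1 \<le> maxlen n h"
proof -
  have "0 < n" using first_letter by simp
  then have "1 \<le> length (h 0)" using image_nonempty[of 0] by (cases "h 0") auto
  then show ?thesis using image_length_le[of 0] \<open>0 < n\<close> by simp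
qed

lemma approx_Suc: "approx (Suc k) = morph h (approx k)"
  by (simp add: approx_def)

lemma approx_Suc_append: "approx (Suc k) = approx k @ (morph h ^^ k) tail0"
proof -
  have "approx (Suc k) = (morph h ^^ k) (morph h [w 0])" by (simp add: approx_def funpow_swap1)
  also have "morph h [w 0] = [w 0] @ tail0" using first_image by simp
  finally show ?thesis by (simp only: morph_power_append approx_def)
qed

lemma tail0_letters: "set tail0 \<subseteq> {..<n}"
  using image_letters[OF first_letter] first_image by auto

lemma approx_letters: "set (approx k) \<subseteq> {..<n}"
  by (induction k) (simp_all add: approx_def first_letter morph_letters)

lemma tail_image_nonempty: "(morph h ^^ k) tail0 \<noteq> []"
proof (induction k)
  case (Suc k)
  have "set ((morph h ^^ k) tail0) \<subseteq> {..<n}"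
    using approx_letters[of "Suc k"] by (simp add: approx_Suc_append)
  then show ?case using Suc length_morph_ge[of "(morph h ^^ k) tail0"] by auto
qed (simp add: tail0_nonempty)

lemma length_approx: "k < length (approx k)"
proof (induction k)
  case (Suc k)
  have "0 < length ((morph h ^^ k) tail0)" using tail_image_nonempty[of k] by simp
  then show ?case using Suc.IH unfolding approx_Suc_append length_append by linarith
qed (simp add: approx_def)

lemma wprefix_approx: "L \<le> length (approx k) \<Longrightarrow> wprefix w L = take L (approx k)"
  by (rule nth_equalityI) (simp_all add: wprefix_def w_approx)

lemma letter_range: "w p < n"
proof -
  have "p < length (approx p)" by (rule length_approx)
  then have "w p \<in> set (approx p)" by (simp add: w_approx)
  then show ?thesis using approx_letters[of p] by auto
qed

lemma segment_letters: "set (map w xs) \<subseteq> {..<n}"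
  using letter_range by auto

lemma prefix_image: "wprefix w (blk_start h w p) = morph h (wprefix w p)"
proof -
  have "p \<le> length (approx p)" using length_approx[of p] by simp
  then have "approx p = wprefix w p @ drop p (approx p)"
    by (simp add: wprefix_approx)
  then have image: "approx (Suc p) = morph h (wprefix w p) @ morph h (drop p (approx p))"
    by (metis approx_Suc morph_append)
  then have "blk_start h w p \<le> length (approx (Suc p))"
    by (simp add: blk_start_eq_length)
  then have "wprefix w (blk_start h w p) = take (blk_start h w p) (approx (Suc p))"
    by (rule wprefix_approx)
  then show ?thesis using image by (simp add: blk_start_eq_length)
qed

(* Since h is nonerasing, the block h(w_p) starts at position p or later. *)
lemma blk_start_ge: "p \<le> blk_start h w p"
  using length_morph_ge[OF segment_letters[of "[0..<p]"]] by (simp add: blk_start_eq_length wprefix_def)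

lemma incidence_prefix:
  "incidence n h *\<^sub>v parikh n (wprefix w p) = parikh n (wprefix w (blk_start h w p))"
  using incidence_parikh[OF segment_letters] by (simp add: wprefix_def prefix_image[unfolded wprefix_def])

lemma right_stretch_parikh:
  "parikh n (wprefix w (Suc (j (Suc k))))
     = parikh n (wprefix w (blk_start h w (Suc (j k)))) + signed_parikh n (rstretch h w j k)"
proof -
  define r where "r = blk_start h w (Suc (j k)) - 1"
  define j' where "j' = j (Suc k)"
  have r: "blk_start h w (Suc (j k)) = Suc r" using blk_start_ge[of "Suc (j k)"] by (simp add: r_def)
  consider (pos) "r < j'" | (neg) "j' < r" | (empty) "j' = r" by linarith
  then show ?thesis
  proof cases
    case pos
    then have "rstretch h w j k = (map w [Suc r..<Suc j'], 1)"
      by (simp add: rstretch_def Let_def r_def j'_def del: upt_Suc)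
    moreover have "wprefix w (Suc j') = wprefix w (Suc r) @ map w [Suc r..<Suc j']"
      by (rule wprefix_split) (use pos in simp)
    ultimately show ?thesis unfolding r j'_def[symmetric]
      by (intro eq_vecI) (simp_all add: signed_parikh_def parikh_append del: upt_Suc)
  next
    case neg
    then have "rstretch h w j k = (map w [Suc j'..<Suc r], -1)"
      by (simp add: rstretch_def Let_def r_def j'_def del: upt_Suc)
    moreover have "wprefix w (Suc r) = wprefix w (Suc j') @ map w [Suc j'..<Suc r]"
      by (rule wprefix_split) (use neg in simp)
    ultimately show ?thesis unfolding r j'_def[symmetric]
      by (intro eq_vecI) (simp_all add: signed_parikh_def parikh_append del: upt_Suc)
  next
    case empty
    then have "rstretch h w j k = ([], 0)"
      by (simp add: rstretch_def Let_def r_def j'_def del: upt_Suc)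
    with empty show ?thesis unfolding r j'_def[symmetric]
      by (intro eq_vecI) (simp_all add: signed_parikh_def)
  qed
qed

(* The late letters: those of h(t); by the alphabet-stability assumption they are exactly the
   letters of every block h^m(t) with m >= 1. *)
definition late_letters :: "nat set" where
  "late_letters = set (morph h tail0)"

lemma tail_image_letters:
  assumes "1 \<le> m" shows "set ((morph h ^^ m) tail0) = late_letters"
proof -
  have "set ((morph h ^^ m) tail0) = (\<Union>b\<in>set tail0. set ((morph h ^^ m) [b]))"
    by (rule morph_power_letters)
  also have "\<dots> = (\<Union>b\<in>set tail0. set (h b))"
    using tail0_letters letters_stable[OF _ assms] by (intro SUP_cong) auto
  also have "\<dots> = late_letters" by (simp add: late_letters_def morph_def)
  finally show ?thesis .
qed

lemma w_tail_image:
  "q < length ((morph h ^^ m) tail0) \<Longrightarrow> w (length (approx m) + q) = (morph h ^^ m) tail0 ! q"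
  using w_approx[of "length (approx m) + q" "Suc m"] by (simp add: approx_Suc_append nth_append)

(* Each application of h multiplies lengths by at most M. *)
lemma approx_growth: "length (approx (Suc (Suc m))) \<le> maxlen n h ^ 2 * length (approx m)"
proof -
  have "length (approx (Suc (Suc m))) \<le> maxlen n h * length (approx (Suc m))"
    unfolding approx_Suc[of "Suc m"] by (rule length_morph_le[OF approx_letters])
  also have "length (approx (Suc m)) \<le> maxlen n h * length (approx m)"
    unfolding approx_Suc[of m] by (rule length_morph_le[OF approx_letters])
  finally show ?thesis by (simp add: power2_eq_square mult.assoc)
qed

lemma approx_bracket:
  assumes "1 \<le> x" shows "\<exists>m. length (approx m) \<le> x \<and> x < length (approx (Suc m))"
proof -
  define m0 where "m0 = (LEAST m. x < length (approx m))"
  have "x < length (approx m0)"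
    unfolding m0_def by (rule LeastI[of _ x]) (rule length_approx)
  moreover have "m0 \<noteq> 0" using calculation assms by (cases m0) (auto simp: approx_def)
  then obtain m where m: "m0 = Suc m" using not0_implies_Suc by blast
  moreover have "\<not> x < length (approx m)" using m unfolding m0_def by (metis lessI not_less_Least)
  ultimately show ?thesis by (intro exI[of _ m]) auto
qed

lemma late_letter_position:
  assumes "length (approx 1) \<le> p" shows "w p \<in> late_letters"
proof -
  obtain m where m: "length (approx m) \<le> p" "p < length (approx (Suc m))"
    using approx_bracket[of p] assms length_approx[of 1] by auto
  have "m \<noteq> 0" using m assms by (cases m) auto
  define q where "q = p - length (approx m)"
  have q: "q < length ((morph h ^^ m) tail0)" using m by (simp add: q_def approx_Suc_append)
  have "w p \<in> set ((morph h ^^ m) tail0)" using w_tail_image[OF q] q m(1) by (simp add: q_def)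
  then show ?thesis using tail_image_letters \<open>m \<noteq> 0\<close> by auto
qed

lemma late_letter_window:
  assumes e: "e \<in> late_letters" and x: "1 \<le> x"
  shows "\<exists>p. x < p \<and> p < maxlen n h ^ 2 * x \<and> w p = e"
proof -
  obtain m where m: "length (approx m) \<le> x" "x < length (approx (Suc m))"
    using approx_bracket[OF x] by blast
  have "e \<in> set ((morph h ^^ Suc m) tail0)" using tail_image_letters[of "Suc m"] e by simp
  then obtain q where q: "q < length ((morph h ^^ Suc m) tail0)" "(morph h ^^ Suc m) tail0 ! q = e"
    by (metis in_set_conv_nth)
  define p where "p = length (approx (Suc m)) + q"
  have "p < length (approx (Suc (Suc m)))" using q(1) by (simp add: p_def approx_Suc_append[of "Suc m"])
  also have "\<dots> \<le> maxlen n h ^ 2 * length (approx m)" by (rule approx_growth)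
  also have "\<dots> \<le> maxlen n h ^ 2 * x" using m(1) by simp
  finally show ?thesis using w_tail_image[OF q(1)] q(2) m(2) by (intro exI[of _ p]) (simp add: p_def)
qed

lemma delta_seq_blocks:
  assumes "delta_seq n h w D i j"
  shows "maximal_block D w (i k) (j k)" and "maxlen n h < i k"
  using assms by (simp_all add: delta_seq_def Let_def)

(* The letter after u^(0) is late and not in Delta; it recurs in (i_k, M^2 i_k), which the
   Delta-block u^(k) therefore cannot reach. *)
lemma delta_seq_ratio_bound:
  assumes ds: "delta_seq n h w D i j"
  shows "j k < maxlen n h ^ 2 * i k"
proof -
  define e where "e = w (Suc (j 0))"
  have "e \<notin> D" using delta_seq_blocks(1)[OF ds, of 0] by (simp add: maximal_block_def e_def)
  have "length (approx 1) = length (h (w 0))" by (simp add: approx_def)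
  also have "\<dots> \<le> maxlen n h" by (rule image_length_le[OF first_letter])
  also have "\<dots> < Suc (j 0)"
    using delta_seq_blocks[OF ds, of 0] by (simp add: maximal_block_def)
  finally have "e \<in> late_letters" unfolding e_def by (intro late_letter_position) simp
  moreover have "1 \<le> i k" using delta_seq_blocks(2)[OF ds, of k] maxlen_pos by simp
  ultimately obtain p where p: "i k < p" "p < maxlen n h ^ 2 * i k" "w p = e"
    using late_letter_window by blast
  have "\<not> p \<le> j k"
    using delta_seq_blocks(1)[OF ds, of k] p(1,3) \<open>e \<notin> D\<close> by (auto simp: maximal_block_def)
  then show ?thesis using p(2) by simp
qed

lemma left_prefix_step:
  "parikh n (wprefix w (i (Suc k)))
     = incidence n h *\<^sub>v parikh n (wprefix w (i k)) + - signed_parikh n (lstretch h w i k)"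
  using left_stretch_parikh[of n w i k h] by (simp add: incidence_prefix minus_add_uminus_vec[of _ n])

lemma right_prefix_step:
  "parikh n (wprefix w (Suc (j (Suc k))))
     = incidence n h *\<^sub>v parikh n (wprefix w (Suc (j k))) + signed_parikh n (rstretch h w j k)"
  using right_stretch_parikh[of j k] by (simp add: incidence_prefix)

lemma constant_left_stretch_closed_form:
  assumes "\<forall>k. lstretch h w i k = \<sigma>"
  shows "parikh n (wprefix w (i k)) = (incidence n h ^\<^sub>m k) *\<^sub>v parikh n (wprefix w (i 0))
           + pow_sum n (incidence n h) k *\<^sub>v (- signed_parikh n \<sigma>)"
  by (rule affine_recurrence_closed_form[where P = "\<lambda>k. parikh n (wprefix w (i k))"])
    (simp_all add: left_prefix_step assms)

(* With constant stretches on both sides, the blocks u^(k) have Parikh vectors in closed form: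
   they are differences of the two prefix sequences, whose recurrences share the matrix A. *)
lemma constant_stretches_closed_form:
  assumes left: "\<forall>k. lstretch h w i k = \<sigma>" and right: "\<forall>k. rstretch h w j k = \<rho>"
    and i_le_j: "\<And>k. i k \<le> j k"
  shows "parikh n (map w [i k..<Suc (j k)]) = (incidence n h ^\<^sub>m k) *\<^sub>v parikh n (map w [i 0..<Suc (j 0)])
           + pow_sum n (incidence n h) k *\<^sub>v (signed_parikh n \<rho> + signed_parikh n \<sigma>)"
proof -
  define P where "P k = parikh n (wprefix w (i k))" for k
  define Q where "Q k = parikh n (wprefix w (Suc (j k)))" for k
  have block: "parikh n (map w [i k..<Suc (j k)]) = Q k - P k" for k
    using wprefix_split[of "i k" "Suc (j k)" w] i_le_j[of k]
    by (intro eq_vecI) (simp_all add: P_def Q_def parikh_append del: upt_Suc)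
  have step: "Q (Suc k) - P (Suc k)
      = incidence n h *\<^sub>v (Q k - P k) + (signed_parikh n \<rho> + signed_parikh n \<sigma>)" for k
    using affine_step_diff[OF incidence_carrier _ _ _ _ left_prefix_step right_prefix_step] left right
    by (simp add: P_def Q_def) (intro eq_vecI; simp)
  show ?thesis unfolding block
    by (rule affine_recurrence_closed_form[where P = "\<lambda>k. Q k - P k", OF incidence_carrier _ _ refl step])
      (simp_all add: P_def Q_def)
qed

end

(* Lemma 15. *)
theorem lemma15:
  fixes n :: nat and h :: "nat \<Rightarrow> nat list" and w :: "nat \<Rightarrow> nat"
    and D :: "nat set" and i j :: "nat \<Rightarrow> nat"
    and \<sigma> \<rho> :: "nat list \<times> int"
  assumes "standing n h w"
    and "D \<subseteq> {..<n}" and "D \<noteq> {}" and "D \<noteq> {..<n}"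
    and "delta_seq n h w D i j"
    and "\<forall>k. lstretch h w i k = \<sigma>"
    and "\<forall>k. rstretch h w j k = \<rho>"
  shows "\<exists>U V X Y :: int vec. \<exists>c :: real.
     U \<in> carrier_vec n \<and> V \<in> carrier_vec n \<and> X \<in> carrier_vec n \<and> Y \<in> carrier_vec n \<and>
     (\<forall>a<n. U $ a \<ge> 0) \<and> U \<noteq> 0\<^sub>v n \<and> (\<forall>a<n. V $ a \<ge> 0) \<and> V \<noteq> 0\<^sub>v n \<and>
     (\<forall>k. int (i k) = ones_mult n ((incidence n h ^\<^sub>m k) *\<^sub>v V + pow_sum n (incidence n h) k *\<^sub>v X) \<and>
          int (j k) = int (i k) + ones_mult n ((incidence n h ^\<^sub>m k) *\<^sub>v U + pow_sum n (incidence n h) k *\<^sub>v Y) - 1 \<and>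
          real (j k) / real (i k) < c)"
proof -
  interpret fixed_point n h w by (rule fixed_point.intro) (rule assms(1))
  define U where "U = parikh n (map w [i 0..<Suc (j 0)])"
  define V where "V = parikh n (wprefix w (i 0))"
  have i_le_j: "i k \<le> j k" and i_pos: "0 < i k" for k
    using delta_seq_blocks[OF assms(5), of k] maxlen_pos by (auto simp: maximal_block_def)
  have length_i: "int (i k) = ones_mult n (parikh n (wprefix w (i k)))" for k
    using ones_mult_parikh[OF segment_letters] by (simp add: wprefix_def)
  have length_block: "int (j k) = int (i k) + ones_mult n (parikh n (map w [i k..<Suc (j k)])) - 1" for k
    using ones_mult_parikh[OF segment_letters] i_le_j[of k] by (simp del: upt_Suc)
  have ratio: "real (j k) / real (i k) < real (maxlen n h ^ 2)" for k
    using delta_seq_ratio_bound[OF assms(5), of k] i_pos[of k]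
    by (simp add: divide_less_eq) (metis of_nat_less_iff of_nat_mult of_nat_power)
  show ?thesis
  proof (rule exI[of _ U], rule exI[of _ V], rule exI[of _ "- signed_parikh n \<sigma>"],
      rule exI[of _ "signed_parikh n \<rho> + signed_parikh n \<sigma>"], rule exI[of _ "real (maxlen n h ^ 2)"],
      intro conjI allI impI)
    show "U \<noteq> 0\<^sub>v n" "V \<noteq> 0\<^sub>v n"
      using parikh_nonzero[OF segment_letters] i_le_j[of 0] i_pos[of 0]
      by (simp_all add: U_def V_def wprefix_def del: upt_Suc)
    fix k
    show "int (i k) = ones_mult n ((incidence n h ^\<^sub>m k) *\<^sub>v V
        + pow_sum n (incidence n h) k *\<^sub>v - signed_parikh n \<sigma>)"
      using length_i[of k] by (simp only: constant_left_stretch_closed_form[OF assms(6), of k] V_def)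
    show "int (j k) = int (i k) + ones_mult n ((incidence n h ^\<^sub>m k) *\<^sub>v U
        + pow_sum n (incidence n h) k *\<^sub>v (signed_parikh n \<rho> + signed_parikh n \<sigma>)) - 1"
      using length_block[of k]
      by (simp only: constant_stretches_closed_form[OF assms(6,7) i_le_j, of k] U_def)
    show "real (j k) / real (i k) < real (maxlen n h ^ 2)" by (rule ratio)
  qed (simp_all add: U_def V_def)
qed

end
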